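(* Let $X,Y$ be $\mathfrak{Q}$-preordered $\mathfrak{Q}$-subsets and $f\colon X\to Y$, $g\colon Y\to X$ $\mathfrak{Q}$-order-preserving maps. The following are equivalent: (i) $f\dashv g$ is a $\mathfrak{Q}$-Galois connection; (ii) $(f_{\natural})_{\uparrow}\colon\mathsf{P}X\to\mathsf{P}^{\dagger}Y$ and $(g^{\natural})^{\downarrow}\colon\mathsf{P}^{\dagger}Y\to\mathsf{P}X$ satisfy $(f_{\natural})_{\uparrow}\dashv(g^{\natural})^{\downarrow}$ (a $\mathfrak{Q}$-polarity from $X$ to $Y$); (iii) $(f_{\natural})^{*}\colon\mathsf{P}Y\to\mathsf{P}X$ and $(g^{\natural})_{*}\colon\mathsf{P}X\to\mathsf{P}Y$ satisfy $(f_{\natural})^{*}\dashv(g^{\natural})_{*}$ (a $\mathfrak{Q}$-axiality from $Y$ to $X$); (iv) $(f_{\natural})_{\dagger}\colon\mathsf{P}^{\dagger}Y\to\mathsf{P}^{\dagger}X$ and $(g^{\natural})^{\dagger}\colon\mathsf{P}^{\dagger}X\to\mathsf{P}^{\dagger}Y$ satisfy $(f_{\natural})_{\dagger}\dashv(g^{\natural})^{\dagger}$ (a dual $\mathfrak{Q}$-axiality from $Y$ to $X$).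
   Context: $(\mathfrak{Q},\&,e)$ is a non-trivial unital quantale (complete lattice with associative multiplication with unit $e$ preserving joins in each variable, $\bot<e$), implications $p\& q\le r\iff p\le r/ q\iff q\le p\backslash r$, $\mathcal{D}\mathfrak{Q}(p,q)=\{u\mid (u/ p)\& p=u=q\&(q\backslash u)\}$. A $\mathfrak{Q}$-subset is a set $X$ with $|\cdot|\colon X\to\mathfrak{Q}$; $\mathbf{1}_q$ is $\{*\}$ with $|*|=q$. A $\mathfrak{Q}$-relation from $X$ to $Y$ is a map $\phi\colon X\times Y\to\mathfrak{Q}$ with $\phi(x,y)\in\mathcal{D}\mathfrak{Q}(|x|,|y|)$, ordered pointwise; composition $(\psi\circ\phi)(x,z)=\bigvee_y(\psi(y,z)/|y|)\&\phi(x,y)$; $\xi\swarrow\phi$ is the largest $\psi'$ with $\psi'\circ\phi\le\xi$ and $\psi\searrow\xi$ the largest $\phi'$ with $\psi\circ\phi'\le\xi$. A $\mathfrak{Q}$-preordered $\mathfrak{Q}$-subset is a $\mathfrak{Q}$-subset $X$ with a $\mathfrak{Q}$-relation $1_X^{\natural}$ on $X$ with $\mathrm{id}_X\le 1_X^{\natural}$ ($\mathrm{id}_X(x,x)=|x|$, else $\bot$) and $1_X^{\natural}\circ 1_X^{\natural}\le 1_X^{\natural}$. A $\mathfrak{Q}$-order-preserving map $f\colon X\to Y$ satisfies $|fx|=|x|$ and $1_X^{\natural}(x,x')\le 1_Y^{\natural}(fx,fx')$; for such maps $h,k\colon A\to B$, $h\le k$ means $|a|\le 1_B^{\natural}(ha,ka)$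 for all $a$; a $\mathfrak{Q}$-Galois connection $h\dashv k$ ($h\colon A\to B$, $k\colon B\to A$) means $1_A\le kh$ and $hk\le 1_B$. Graph and cograph: $f_{\natural}(x,y)=1_Y^{\natural}(fx,y)$ (from $X$ to $Y$), $f^{\natural}(y,x)=1_Y^{\natural}(y,fx)$ (from $Y$ to $X$); thus $g^{\natural}(x,y)=1_X^{\natural}(x,gy)$ is a relation from $X$ to $Y$. $\mathsf{P}X$ consists of $\mathfrak{Q}$-relations $\mu$ from $X$ to some $\mathbf{1}_q$ with $\mu\circ 1_X^{\natural}\le\mu$, with $|\mu|=q$ and $\mathfrak{Q}$-preorder $1_{\mathsf{P}X}^{\natural}(\mu,\mu')=\mu'\swarrow\mu$; $\mathsf{P}^{\dagger}X$ consists of $\mathfrak{Q}$-relations $\lambda$ from some $\mathbf{1}_q$ to $X$ with $1_X^{\natural}\circ\lambda\le\lambda$, with $|\lambda|=q$ and $1_{\mathsf{P}^{\dagger}X}^{\natural}(\lambda,\lambda')=\lambda'\searrow\lambda$. For a $\mathfrak{Q}$-relation $\phi$ from $X$ to $Y$ with $1_Y^{\natural}\circ\phi\circ1_X^{\natural}\le\phi$ (a $\mathfrak{Q}$-distributor, e.g. $f_{\natural}$, $g^{\natural}$): $\phi_{\uparrow}\mu=\phi\swarrow\mu$ ($\mathsf{P}X\to\mathsf{P}^{\dagger}Y$), $\phi^{\downarrow}\lambda'=\lambda'\searrow\phi$ ($\mathsf{P}^{\dagger}Y\to\mathsf{P}X$), $\phi^{*}\mu'=\mu'\circ\phi$ ($\mathsf{P}Y\to\mathsf{P}X$),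 $\phi_{*}\mu=\mu\swarrow\phi$ ($\mathsf{P}X\to\mathsf{P}Y$), $\phi_{\dagger}\lambda'=\phi\searrow\lambda'$ ($\mathsf{P}^{\dagger}Y\to\mathsf{P}^{\dagger}X$), $\phi^{\dagger}\lambda=\phi\circ\lambda$ ($\mathsf{P}^{\dagger}X\to\mathsf{P}^{\dagger}Y$); these are $\mathfrak{Q}$-order-preserving maps. *)

theory Defs
  imports Main
begin

definition quantale :: "('q::complete_lattice \<Rightarrow> 'q \<Rightarrow> 'q) \<Rightarrow> 'q \<Rightarrow> bool" where
  "quantale m e \<longleftrightarrow>
     (\<forall>a b c. m (m a b) c = m a (m b c)) \<and>
     (\<forall>a. m e a = a \<and> m a e = a) \<and>
     (\<forall>a S. m a (Sup S) = (SUP s\<in>S. m a s)) \<and>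
     (\<forall>S b. m (Sup S) b = (SUP s\<in>S. m s b)) \<and>
     bot < e"

text \<open>Right implication r / q (largest p with p & q \<le> r) and left implication
  p \ r (largest q with p & q \<le> r).\<close>

definition rdiv :: "('q::complete_lattice \<Rightarrow> 'q \<Rightarrow> 'q) \<Rightarrow> 'q \<Rightarrow> 'q \<Rightarrow> 'q" where
  "rdiv m r q = Sup {p. m p q \<le> r}"

definition ldiv :: "('q::complete_lattice \<Rightarrow> 'q \<Rightarrow> 'q) \<Rightarrow> 'q \<Rightarrow> 'q \<Rightarrow> 'q" where
  "ldiv m p r = Sup {q. m p q \<le> r}"

definition DQ :: "('q::complete_lattice \<Rightarrow> 'q \<Rightarrow> 'q) \<Rightarrow> 'q \<Rightarrow> 'q \<Rightarrow> 'q set" where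
  "DQ m p q = {u. m (rdiv m u p) p = u \<and> u = m q (ldiv m q u)}"

text \<open>A Q-subset is a carrier set X together with a type map tX.
  A Q-relation from (X,tX) to (Y,tY) is a function phi with phi x y in DQ(|x|,|y|)
  for x in X, y in Y (values outside the carriers are irrelevant).\<close>

definition is_qrel :: "('q::complete_lattice \<Rightarrow> 'q \<Rightarrow> 'q) \<Rightarrow> 'a set \<Rightarrow> ('a \<Rightarrow> 'q) \<Rightarrow>
    'b set \<Rightarrow> ('b \<Rightarrow> 'q) \<Rightarrow> ('a \<Rightarrow> 'b \<Rightarrow> 'q) \<Rightarrow> bool" where
  "is_qrel m X tX Y tY phi \<longleftrightarrow> (\<forall>x\<in>X. \<forall>y\<in>Y. phi x y \<in> DQ m (tX x) (tY y))"

definition qrel_le :: "'a set \<Rightarrow> 'b set \<Rightarrow> ('a \<Rightarrow> 'b \<Rightarrow> 'q::complete_lattice) \<Rightarrow>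
    ('a \<Rightarrow> 'b \<Rightarrow> 'q) \<Rightarrow> bool" where
  "qrel_le X Y phi psi \<longleftrightarrow> (\<forall>x\<in>X. \<forall>y\<in>Y. phi x y \<le> psi x y)"

definition qcomp :: "('q::complete_lattice \<Rightarrow> 'q \<Rightarrow> 'q) \<Rightarrow> 'b set \<Rightarrow> ('b \<Rightarrow> 'q) \<Rightarrow>
    ('b \<Rightarrow> 'c \<Rightarrow> 'q) \<Rightarrow> ('a \<Rightarrow> 'b \<Rightarrow> 'q) \<Rightarrow> ('a \<Rightarrow> 'c \<Rightarrow> 'q)" where
  "qcomp m Y tY psi phi = (\<lambda>x z. SUP y\<in>Y. m (rdiv m (psi y z) (tY y)) (phi x y))"

definition qlift :: "('q::complete_lattice \<Rightarrow> 'q \<Rightarrow> 'q) \<Rightarrow> 'a set \<Rightarrow> ('a \<Rightarrow> 'q) \<Rightarrow>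
    'b set \<Rightarrow> ('b \<Rightarrow> 'q) \<Rightarrow> 'c set \<Rightarrow> ('c \<Rightarrow> 'q) \<Rightarrow>
    ('a \<Rightarrow> 'c \<Rightarrow> 'q) \<Rightarrow> ('a \<Rightarrow> 'b \<Rightarrow> 'q) \<Rightarrow> ('b \<Rightarrow> 'c \<Rightarrow> 'q)" where
  "qlift m X tX Y tY Z tZ xi phi =
    (SOME psi. is_qrel m Y tY Z tZ psi \<and> qrel_le X Z (qcomp m Y tY psi phi) xi \<and>
       (\<forall>psi'. is_qrel m Y tY Z tZ psi' \<and> qrel_le X Z (qcomp m Y tY psi' phi) xi
           \<longrightarrow> qrel_le Y Z psi' psi))"

definition qext :: "('q::complete_lattice \<Rightarrow> 'q \<Rightarrow> 'q) \<Rightarrow> 'a set \<Rightarrow> ('a \<Rightarrow> 'q) \<Rightarrow>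
    'b set \<Rightarrow> ('b \<Rightarrow> 'q) \<Rightarrow> 'c set \<Rightarrow> ('c \<Rightarrow> 'q) \<Rightarrow>
    ('b \<Rightarrow> 'c \<Rightarrow> 'q) \<Rightarrow> ('a \<Rightarrow> 'c \<Rightarrow> 'q) \<Rightarrow> ('a \<Rightarrow> 'b \<Rightarrow> 'q)" where
  "qext m X tX Y tY Z tZ psi xi =
    (SOME phi. is_qrel m X tX Y tY phi \<and> qrel_le X Z (qcomp m Y tY psi phi) xi \<and>
       (\<forall>phi'. is_qrel m X tX Y tY phi' \<and> qrel_le X Z (qcomp m Y tY psi phi') xi
           \<longrightarrow> qrel_le X Y phi' phi))"

definition qpreorder :: "('q::complete_lattice \<Rightarrow> 'q \<Rightarrow> 'q) \<Rightarrow> 'a set \<Rightarrow> ('a \<Rightarrow> 'q) \<Rightarrow>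
    ('a \<Rightarrow> 'a \<Rightarrow> 'q) \<Rightarrow> bool" where
  "qpreorder m X tX R \<longleftrightarrow>
     is_qrel m X tX X tX R \<and>
     qrel_le X X (\<lambda>x x'. if x = x' then tX x else bot) R \<and>
     qrel_le X X (qcomp m X tX R R) R"

definition qmono :: "'a set \<Rightarrow> ('a \<Rightarrow> 'q::complete_lattice) \<Rightarrow> ('a \<Rightarrow> 'a \<Rightarrow> 'q) \<Rightarrow>
    'b set \<Rightarrow> ('b \<Rightarrow> 'q) \<Rightarrow> ('b \<Rightarrow> 'b \<Rightarrow> 'q) \<Rightarrow> ('a \<Rightarrow> 'b) \<Rightarrow> bool" where
  "qmono X tX RX Y tY RY f \<longleftrightarrow>
     (\<forall>x\<in>X. f x \<in> Y \<and> tY (f x) = tX x \<and> (\<forall>x'\<in>X. RX x x' \<le> RY (f x) (f x')))"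

definition qgalois :: "'a set \<Rightarrow> ('a \<Rightarrow> 'q::complete_lattice) \<Rightarrow> ('a \<Rightarrow> 'a \<Rightarrow> 'q) \<Rightarrow>
    'b set \<Rightarrow> ('b \<Rightarrow> 'q) \<Rightarrow> ('b \<Rightarrow> 'b \<Rightarrow> 'q) \<Rightarrow> ('a \<Rightarrow> 'b) \<Rightarrow> ('b \<Rightarrow> 'a) \<Rightarrow> bool" where
  "qgalois A tA RA B tB RB h k \<longleftrightarrow>
     (\<forall>a\<in>A. tA a \<le> RA a (k (h a))) \<and> (\<forall>b\<in>B. tB b \<le> RB (h (k b)) b)"

text \<open>The one-point Q-subset 1_q is (UNIV :: unit set, \<lambda>_. q).
  An element of P X is a pair (mu, q) with mu a Q-relation from X to 1_q
  with mu o 1_X \<le> mu; its type is q.\<close>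

definition PS :: "('q::complete_lattice \<Rightarrow> 'q \<Rightarrow> 'q) \<Rightarrow> 'a set \<Rightarrow> ('a \<Rightarrow> 'q) \<Rightarrow>
    ('a \<Rightarrow> 'a \<Rightarrow> 'q) \<Rightarrow> (('a \<Rightarrow> unit \<Rightarrow> 'q) \<times> 'q) set" where
  "PS m X tX R = {(mu, q). is_qrel m X tX UNIV (\<lambda>_. q) mu \<and>
                          qrel_le X UNIV (qcomp m X tX mu R) mu}"

definition PS_ty :: "(('a \<Rightarrow> unit \<Rightarrow> 'q) \<times> 'q) \<Rightarrow> 'q" where
  "PS_ty P = snd P"

text \<open>1_{PX}(mu, mu') = mu' \<swarrow> mu.\<close>
definition PS_rel :: "('q::complete_lattice \<Rightarrow> 'q \<Rightarrow> 'q) \<Rightarrow> 'a set \<Rightarrow> ('a \<Rightarrow> 'q) \<Rightarrow>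
    (('a \<Rightarrow> unit \<Rightarrow> 'q) \<times> 'q) \<Rightarrow> (('a \<Rightarrow> unit \<Rightarrow> 'q) \<times> 'q) \<Rightarrow> 'q" where
  "PS_rel m X tX P P' =
     qlift m X tX UNIV (\<lambda>_. snd P) UNIV (\<lambda>_. snd P') (fst P') (fst P) () ()"

text \<open>An element of P\<dagger> X is a pair (lam, q) with lam a Q-relation from 1_q to X
  with 1_X o lam \<le> lam; its type is q.\<close>

definition PD :: "('q::complete_lattice \<Rightarrow> 'q \<Rightarrow> 'q) \<Rightarrow> 'a set \<Rightarrow> ('a \<Rightarrow> 'q) \<Rightarrow>
    ('a \<Rightarrow> 'a \<Rightarrow> 'q) \<Rightarrow> ((unit \<Rightarrow> 'a \<Rightarrow> 'q) \<times> 'q) set" where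
  "PD m X tX R = {(lam, q). is_qrel m UNIV (\<lambda>_. q) X tX lam \<and>
                           qrel_le UNIV X (qcomp m X tX R lam) lam}"

definition PD_ty :: "((unit \<Rightarrow> 'a \<Rightarrow> 'q) \<times> 'q) \<Rightarrow> 'q" where
  "PD_ty L = snd L"

text \<open>1_{P\<dagger>X}(lam, lam') = lam' \<searrow> lam.\<close>
definition PD_rel :: "('q::complete_lattice \<Rightarrow> 'q \<Rightarrow> 'q) \<Rightarrow> 'a set \<Rightarrow> ('a \<Rightarrow> 'q) \<Rightarrow>
    ((unit \<Rightarrow> 'a \<Rightarrow> 'q) \<times> 'q) \<Rightarrow> ((unit \<Rightarrow> 'a \<Rightarrow> 'q) \<times> 'q) \<Rightarrow> 'q" where
  "PD_rel m X tX L L' =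
     qext m UNIV (\<lambda>_. snd L) UNIV (\<lambda>_. snd L') X tX (fst L') (fst L) () ()"

text \<open>phi_up mu = phi \<swarrow> mu  (P X \<rightarrow> P\<dagger> Y)\<close>
definition dist_up :: "('q::complete_lattice \<Rightarrow> 'q \<Rightarrow> 'q) \<Rightarrow> 'a set \<Rightarrow> ('a \<Rightarrow> 'q) \<Rightarrow>
    'b set \<Rightarrow> ('b \<Rightarrow> 'q) \<Rightarrow> ('a \<Rightarrow> 'b \<Rightarrow> 'q) \<Rightarrow>
    (('a \<Rightarrow> unit \<Rightarrow> 'q) \<times> 'q) \<Rightarrow> ((unit \<Rightarrow> 'b \<Rightarrow> 'q) \<times> 'q)" where
  "dist_up m X tX Y tY phi P = (qlift m X tX UNIV (\<lambda>_. snd P) Y tY phi (fst P), snd P)"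

text \<open>phi_down lam' = lam' \<searrow> phi  (P\<dagger> Y \<rightarrow> P X)\<close>
definition dist_down :: "('q::complete_lattice \<Rightarrow> 'q \<Rightarrow> 'q) \<Rightarrow> 'a set \<Rightarrow> ('a \<Rightarrow> 'q) \<Rightarrow>
    'b set \<Rightarrow> ('b \<Rightarrow> 'q) \<Rightarrow> ('a \<Rightarrow> 'b \<Rightarrow> 'q) \<Rightarrow>
    ((unit \<Rightarrow> 'b \<Rightarrow> 'q) \<times> 'q) \<Rightarrow> (('a \<Rightarrow> unit \<Rightarrow> 'q) \<times> 'q)" where
  "dist_down m X tX Y tY phi L = (qext m X tX UNIV (\<lambda>_. snd L) Y tY (fst L) phi, snd L)"

text \<open>phi^* mu' = mu' o phi  (P Y \<rightarrow> P X)\<close>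
definition dist_pb :: "('q::complete_lattice \<Rightarrow> 'q \<Rightarrow> 'q) \<Rightarrow> 'a set \<Rightarrow> ('a \<Rightarrow> 'q) \<Rightarrow>
    'b set \<Rightarrow> ('b \<Rightarrow> 'q) \<Rightarrow> ('a \<Rightarrow> 'b \<Rightarrow> 'q) \<Rightarrow>
    (('b \<Rightarrow> unit \<Rightarrow> 'q) \<times> 'q) \<Rightarrow> (('a \<Rightarrow> unit \<Rightarrow> 'q) \<times> 'q)" where
  "dist_pb m X tX Y tY phi P = (qcomp m Y tY (fst P) phi, snd P)"

text \<open>phi_* mu = mu \<swarrow> phi  (P X \<rightarrow> P Y)\<close>
definition dist_pf :: "('q::complete_lattice \<Rightarrow> 'q \<Rightarrow> 'q) \<Rightarrow> 'a set \<Rightarrow> ('a \<Rightarrow> 'q) \<Rightarrow>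
    'b set \<Rightarrow> ('b \<Rightarrow> 'q) \<Rightarrow> ('a \<Rightarrow> 'b \<Rightarrow> 'q) \<Rightarrow>
    (('a \<Rightarrow> unit \<Rightarrow> 'q) \<times> 'q) \<Rightarrow> (('b \<Rightarrow> unit \<Rightarrow> 'q) \<times> 'q)" where
  "dist_pf m X tX Y tY phi P = (qlift m X tX Y tY UNIV (\<lambda>_. snd P) (fst P) phi, snd P)"

text \<open>phi_\<dagger> lam' = phi \<searrow> lam'  (P\<dagger> Y \<rightarrow> P\<dagger> X)\<close>
definition dist_dpb :: "('q::complete_lattice \<Rightarrow> 'q \<Rightarrow> 'q) \<Rightarrow> 'a set \<Rightarrow> ('a \<Rightarrow> 'q) \<Rightarrow>
    'b set \<Rightarrow> ('b \<Rightarrow> 'q) \<Rightarrow> ('a \<Rightarrow> 'b \<Rightarrow> 'q) \<Rightarrow>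
    ((unit \<Rightarrow> 'b \<Rightarrow> 'q) \<times> 'q) \<Rightarrow> ((unit \<Rightarrow> 'a \<Rightarrow> 'q) \<times> 'q)" where
  "dist_dpb m X tX Y tY phi L = (qext m UNIV (\<lambda>_. snd L) X tX Y tY phi (fst L), snd L)"

text \<open>phi^\<dagger> lam = phi o lam  (P\<dagger> X \<rightarrow> P\<dagger> Y)\<close>
definition dist_dpf :: "('q::complete_lattice \<Rightarrow> 'q \<Rightarrow> 'q) \<Rightarrow> 'a set \<Rightarrow> ('a \<Rightarrow> 'q) \<Rightarrow>
    'b set \<Rightarrow> ('b \<Rightarrow> 'q) \<Rightarrow> ('a \<Rightarrow> 'b \<Rightarrow> 'q) \<Rightarrow>
    ((unit \<Rightarrow> 'a \<Rightarrow> 'q) \<times> 'q) \<Rightarrow> ((unit \<Rightarrow> 'b \<Rightarrow> 'q) \<times> 'q)" where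
  "dist_dpf m X tX Y tY phi L = (qcomp m X tX phi (fst L), snd L)"

text \<open>Graph f_nat(x,y) = 1_Y(fx, y) (X \<rightarrow> Y); for g : Y \<rightarrow> X,
  cograph g^nat(x,y) = 1_X(x, gy) (X \<rightarrow> Y).\<close>
definition graph :: "('b \<Rightarrow> 'b \<Rightarrow> 'q) \<Rightarrow> ('a \<Rightarrow> 'b) \<Rightarrow> ('a \<Rightarrow> 'b \<Rightarrow> 'q)" where
  "graph RY f = (\<lambda>x y. RY (f x) y)"

definition cograph :: "('a \<Rightarrow> 'a \<Rightarrow> 'q) \<Rightarrow> ('b \<Rightarrow> 'a) \<Rightarrow> ('a \<Rightarrow> 'b \<Rightarrow> 'q)" where
  "cograph RX g = (\<lambda>x y. RX x (g y))"

end

theory Submission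
  imports Defs
begin

(* A Q-Galois connection f \<stileturn> g amounts to the equality of the graph f\<^sub>\<natural> and the cograph
   g\<^sup>\<natural>: order preservation of f and g together with transitivity gives both inequalities.
   For a single Q-relation \<phi>, each of the pairs (\<phi>\<^sub>\<up>, \<phi>\<^sup>\<down>), (\<phi>\<^sup>\<star>, \<phi>\<^sub>\<star>) and (\<phi>\<^sub>\<dagger>, \<phi>\<^sup>\<dagger>) is
   adjoint, because every unit and counit inequality is an instance of the universal property
   of the lift \<swarrow> or the extension \<searrow>; with \<phi> = f\<^sub>\<natural> = g\<^sup>\<natural> this proves (i) \<Rightarrow> (ii), (iii), (iv).
   Conversely, evaluating the unit and counit of an induced adjunction at representable
   (co)presheaves, whose images are controlled by Yoneda-type bounds, returns the unit
   |x| \<le> 1\<^sub>X(x, g f x) and counit |y| \<le> 1\<^sub>Y(f g y, y) of f \<stileturn> g. *)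

definition yoneda :: "('a \<Rightarrow> 'q) \<Rightarrow> ('a \<Rightarrow> 'a \<Rightarrow> 'q) \<Rightarrow> 'a \<Rightarrow> ('a \<Rightarrow> unit \<Rightarrow> 'q) \<times> 'q" where
  "yoneda tX R z = ((\<lambda>x _. R x z), tX z)"

definition coyoneda :: "('a \<Rightarrow> 'q) \<Rightarrow> ('a \<Rightarrow> 'a \<Rightarrow> 'q) \<Rightarrow> 'a \<Rightarrow> (unit \<Rightarrow> 'a \<Rightarrow> 'q) \<times> 'q" where
  "coyoneda tX R z = ((\<lambda>_ x. R z x), tX z)"

lemma greatest_qrel_choice_eq:
  assumes "A best" and "B best" and "\<And>psi. A psi \<Longrightarrow> B psi \<Longrightarrow> qrel_le Y Z psi best"
    and "y \<in> Y" and "z \<in> Z"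
  shows "(SOME psi. A psi \<and> B psi \<and> (\<forall>psi'. A psi' \<and> B psi' \<longrightarrow> qrel_le Y Z psi' psi)) y z
    = best y z"
proof -
  let ?P = "\<lambda>psi. A psi \<and> B psi \<and> (\<forall>psi'. A psi' \<and> B psi' \<longrightarrow> qrel_le Y Z psi' psi)"
  have "?P best"
    using assms(1-3) by blast
  then have "?P (SOME psi. ?P psi)"
    by (rule someI[where P = ?P])
  then show ?thesis
    using assms unfolding qrel_le_def by (meson antisym)
qed

lemma qpreorder_qrel:
  "qpreorder m X tX R \<Longrightarrow> x \<in> X \<Longrightarrow> x' \<in> X \<Longrightarrow> R x x' \<in> DQ m (tX x) (tX x')"
  unfolding qpreorder_def is_qrel_def by blast

lemma qpreorder_refl: "qpreorder m X tX R \<Longrightarrow> x \<in> X \<Longrightarrow> tX x \<le> R x x"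
  unfolding qpreorder_def qrel_le_def by (metis (full_types))

lemma qpreorder_trans:
  "qpreorder m X tX R \<Longrightarrow> x \<in> X \<Longrightarrow> x' \<in> X \<Longrightarrow> x'' \<in> X \<Longrightarrow>
    m (rdiv m (R x' x'') (tX x')) (R x x') \<le> R x x''"
  unfolding qpreorder_def qrel_le_def qcomp_def by (meson SUP_upper order_trans)

lemma yoneda_in_PS:
  assumes "qpreorder m X tX R" and "z \<in> X"
  shows "yoneda tX R z \<in> PS m X tX R"
  using assms qpreorder_qrel qpreorder_trans
  unfolding yoneda_def PS_def is_qrel_def qrel_le_def qcomp_def by (auto intro!: SUP_least)

lemma coyoneda_in_PD:
  assumes "qpreorder m X tX R" and "z \<in> X"
  shows "coyoneda tX R z \<in> PD m X tX R"
  using assms qpreorder_qrel qpreorder_trans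
  unfolding coyoneda_def PD_def is_qrel_def qrel_le_def qcomp_def by (auto intro!: SUP_least)

lemma PS_qrel: "a \<in> PS m X tX R \<Longrightarrow> is_qrel m X tX UNIV (\<lambda>_. snd a) (fst a)"
  unfolding PS_def by auto

lemma PD_qrel: "b \<in> PD m X tX R \<Longrightarrow> is_qrel m UNIV (\<lambda>_. snd b) X tX (fst b)"
  unfolding PD_def by auto

locale unital_quantale =
  fixes m :: "'q::complete_lattice \<Rightarrow> 'q \<Rightarrow> 'q" and e :: 'q
  assumes quantale: "quantale m e"
begin

lemma qmult_assoc: "m (m a b) c = m a (m b c)"
  using quantale unfolding quantale_def by blast

lemma qmult_unit_left: "m e a = a"
  using quantale unfolding quantale_def by blast

lemma qmult_unit_right: "m a e = a"
  using quantale unfolding quantale_def by blast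

lemma qmult_Sup_right: "m a (Sup S) = (SUP s\<in>S. m a s)"
  using quantale unfolding quantale_def by blast

lemma qmult_Sup_left: "m (Sup S) b = (SUP s\<in>S. m s b)"
  using quantale unfolding quantale_def by blast

lemma qmult_mono_left: "a \<le> a' \<Longrightarrow> m a b \<le> m a' b"
  using qmult_Sup_left[of "{a, a'}" b] by (simp add: sup_absorb2 le_iff_sup)

lemma qmult_mono_right: "b \<le> b' \<Longrightarrow> m a b \<le> m a b'"
  using qmult_Sup_right[of a "{b, b'}"] by (simp add: sup_absorb2 le_iff_sup)

lemma rdiv_mult_le: "m (rdiv m r q) q \<le> r"
  unfolding rdiv_def qmult_Sup_left by (auto intro: SUP_least)

lemma le_rdiv_iff: "p \<le> rdiv m r q \<longleftrightarrow> m p q \<le> r"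
proof
  show "p \<le> rdiv m r q \<Longrightarrow> m p q \<le> r"
    using qmult_mono_left rdiv_mult_le order_trans by blast
qed (simp add: rdiv_def Sup_upper)

lemma mult_ldiv_le: "m p (ldiv m p r) \<le> r"
  unfolding ldiv_def qmult_Sup_right by (auto intro: SUP_least)

lemma le_ldiv_iff: "q \<le> ldiv m p r \<longleftrightarrow> m p q \<le> r"
proof
  show "q \<le> ldiv m p r \<Longrightarrow> m p q \<le> r"
    using qmult_mono_right mult_ldiv_le order_trans by blast
qed (simp add: ldiv_def Sup_upper)

lemma rdiv_mono: "r \<le> r' \<Longrightarrow> rdiv m r q \<le> rdiv m r' q"
  by (meson le_rdiv_iff order_trans rdiv_mult_le)

lemma ldiv_mono: "r \<le> r' \<Longrightarrow> ldiv m p r \<le> ldiv m p r'"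
  by (meson le_ldiv_iff order_trans mult_ldiv_le)

lemma le_mult_rdiv: "q \<le> v \<Longrightarrow> u \<le> m (rdiv m v q) u"
  using qmult_mono_left[of e "rdiv m v q" u] by (simp add: le_rdiv_iff qmult_unit_left)

lemma DQ_rdiv_mult: "u \<in> DQ m p q \<Longrightarrow> m (rdiv m u p) p = u"
  by (simp add: DQ_def)

lemma DQ_mult_ldiv: "u \<in> DQ m p q \<Longrightarrow> m q (ldiv m q u) = u"
  by (simp add: DQ_def)

lemma DQ_le_mult_rdiv: "u \<in> DQ m p q \<Longrightarrow> p \<le> w \<Longrightarrow> u \<le> m (rdiv m u p) w"
  by (metis DQ_rdiv_mult qmult_mono_right)

text \<open>The composite (v / p) & u of a composable pair of diagonals can be computed with
  either implication, which makes composition of Q-relations distribute over joins in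
  the left factor.\<close>

lemma DQ_rdiv_mult_eq_mult_ldiv:
  assumes "v \<in> DQ m p r" and "u \<in> DQ m p0 p"
  shows "m (rdiv m v p) u = m v (ldiv m p u)"
  by (metis DQ_mult_ldiv DQ_rdiv_mult assms qmult_assoc)

lemma DQ_Sup:
  assumes "\<And>u. u \<in> S \<Longrightarrow> u \<in> DQ m p q"
  shows "Sup S \<in> DQ m p q"
proof -
  have "u \<le> m (rdiv m (Sup S) p) p" if "u \<in> S" for u
    by (metis DQ_rdiv_mult Sup_upper assms qmult_mono_left rdiv_mono that)
  then have "m (rdiv m (Sup S) p) p = Sup S"
    by (simp add: Sup_least antisym rdiv_mult_le)
  moreover have "u \<le> m q (ldiv m q (Sup S))" if "u \<in> S" for u
    by (metis DQ_mult_ldiv Sup_upper assms qmult_mono_right ldiv_mono that)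
  then have "m q (ldiv m q (Sup S)) = Sup S"
    by (simp add: Sup_least antisym mult_ldiv_le)
  ultimately show ?thesis
    by (simp add: DQ_def)
qed

lemma DQ_rdiv_mult_mem:
  assumes u: "u \<in> DQ m p q" and v: "v \<in> DQ m q r"
  shows "m (rdiv m v q) u \<in> DQ m p r"
proof -
  define t where "t = m (rdiv m v q) u"
  have t_ldiv: "t = m v (ldiv m q u)"
    unfolding t_def by (rule DQ_rdiv_mult_eq_mult_ldiv[OF v u])
  have "t = m (m (rdiv m v q) (rdiv m u p)) p"
    unfolding t_def using DQ_rdiv_mult[OF u] by (simp add: qmult_assoc)
  moreover have "m (rdiv m v q) (rdiv m u p) \<le> rdiv m t p"
    unfolding le_rdiv_iff t_def by (simp add: qmult_assoc DQ_rdiv_mult[OF u])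
  ultimately have "t \<le> m (rdiv m t p) p"
    by (metis qmult_mono_left)
  then have left: "m (rdiv m t p) p = t"
    by (simp add: antisym rdiv_mult_le)
  have "t = m r (m (ldiv m r v) (ldiv m q u))"
    using t_ldiv DQ_mult_ldiv[OF v] by (metis qmult_assoc)
  moreover have "m (ldiv m r v) (ldiv m q u) \<le> ldiv m r t"
    unfolding le_ldiv_iff by (metis t_ldiv DQ_mult_ldiv[OF v] qmult_assoc order_refl)
  ultimately have "t \<le> m r (ldiv m r t)"
    by (metis qmult_mono_right)
  then have right: "m r (ldiv m r t) = t"
    by (simp add: antisym mult_ldiv_le)
  show ?thesis
    using left right unfolding DQ_def t_def by simp
qed

lemma DQ_self: "q \<in> DQ m q q"
proof -
  have "m (rdiv m q q) q = q"
    by (simp add: antisym le_mult_rdiv rdiv_mult_le)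
  moreover have "e \<le> ldiv m q q"
    by (simp add: le_ldiv_iff qmult_unit_right)
  then have "m q (ldiv m q q) = q"
    by (metis antisym mult_ldiv_le qmult_mono_right qmult_unit_right)
  ultimately show ?thesis
    by (simp add: DQ_def)
qed

lemma DQ_rdiv_self_mult_le: "u \<in> DQ m p q \<Longrightarrow> m (rdiv m q q) u \<le> u"
  by (metis DQ_mult_ldiv qmult_assoc qmult_mono_left rdiv_mult_le)

lemma DQ_rdiv_Sup_mult_le:
  assumes w: "w \<in> DQ m p0 p" and S: "\<And>u. u \<in> S \<Longrightarrow> u \<in> DQ m p r \<and> m (rdiv m u p) w \<le> c"
  shows "m (rdiv m (Sup S) p) w \<le> c"
proof -
  have "m (rdiv m (Sup S) p) w = m (Sup S) (ldiv m p w)"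
    using DQ_Sup S w by (blast intro: DQ_rdiv_mult_eq_mult_ldiv)
  also have "\<dots> = (SUP u\<in>S. m (rdiv m u p) w)"
    unfolding qmult_Sup_left using S w by (intro SUP_cong refl) (metis DQ_rdiv_mult_eq_mult_ldiv)
  also have "\<dots> \<le> c"
    using S by (simp add: SUP_least)
  finally show ?thesis .
qed

lemma qcomp_qrel:
  assumes "is_qrel m X tX Y tY phi" and "is_qrel m Y tY Z tZ psi"
  shows "is_qrel m X tX Z tZ (qcomp m Y tY psi phi)"
  using assms unfolding is_qrel_def qcomp_def by (auto intro!: DQ_Sup DQ_rdiv_mult_mem)

lemma qlift_eq_Sup:
  assumes phi: "is_qrel m X tX Y tY phi" and "y \<in> Y" and "z \<in> Z"
  shows "qlift m X tX Y tY Z tZ xi phi y z =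
    Sup {u \<in> DQ m (tY y) (tZ z). \<forall>x\<in>X. m (rdiv m u (tY y)) (phi x y) \<le> xi x z}"
proof -
  define psi0 where "psi0 y z =
    Sup {u \<in> DQ m (tY y) (tZ z). \<forall>x\<in>X. m (rdiv m u (tY y)) (phi x y) \<le> xi x z}" for y z
  have "is_qrel m Y tY Z tZ psi0"
    unfolding is_qrel_def psi0_def by (auto intro: DQ_Sup)
  moreover have "qrel_le X Z (qcomp m Y tY psi0 phi) xi"
    using phi unfolding qrel_le_def qcomp_def psi0_def is_qrel_def
    by (auto intro!: SUP_least DQ_rdiv_Sup_mult_le)
  moreover have "qrel_le Y Z psi psi0"
    if "is_qrel m Y tY Z tZ psi" and "qrel_le X Z (qcomp m Y tY psi phi) xi" for psi
    using that unfolding qrel_le_def qcomp_def psi0_def is_qrel_def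
    by (fastforce intro!: Sup_upper dest: SUP_le_iff[THEN iffD1])
  ultimately have "qlift m X tX Y tY Z tZ xi phi y z = psi0 y z"
    unfolding qlift_def using assms(2,3) by (intro greatest_qrel_choice_eq)
  then show ?thesis
    by (simp add: psi0_def)
qed

lemma qlift_qrel:
  assumes "is_qrel m X tX Y tY phi"
  shows "is_qrel m Y tY Z tZ (qlift m X tX Y tY Z tZ xi phi)"
  unfolding is_qrel_def by (auto simp: qlift_eq_Sup[OF assms] intro: DQ_Sup)

lemma qlift_comp_le:
  assumes phi: "is_qrel m X tX Y tY phi" and "x \<in> X" and "y \<in> Y" and "z \<in> Z"
  shows "m (rdiv m (qlift m X tX Y tY Z tZ xi phi y z) (tY y)) (phi x y) \<le> xi x z"
  using assms unfolding qlift_eq_Sup[OF assms(1,3,4)] is_qrel_def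
  by (intro DQ_rdiv_Sup_mult_le) auto

lemma le_qlift:
  assumes "is_qrel m X tX Y tY phi" and "y \<in> Y" and "z \<in> Z" and "u \<in> DQ m (tY y) (tZ z)"
    and "\<forall>x\<in>X. m (rdiv m u (tY y)) (phi x y) \<le> xi x z"
  shows "u \<le> qlift m X tX Y tY Z tZ xi phi y z"
  using assms by (simp add: qlift_eq_Sup Sup_upper)

lemma qext_eq_Sup:
  assumes "x \<in> X" and "y \<in> Y"
  shows "qext m X tX Y tY Z tZ psi xi x y =
    Sup {u \<in> DQ m (tX x) (tY y). \<forall>z\<in>Z. m (rdiv m (psi y z) (tY y)) u \<le> xi x z}"
proof -
  define phi0 where "phi0 x y =
    Sup {u \<in> DQ m (tX x) (tY y). \<forall>z\<in>Z. m (rdiv m (psi y z) (tY y)) u \<le> xi x z}" for x y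
  have "is_qrel m X tX Y tY phi0"
    unfolding is_qrel_def phi0_def by (auto intro: DQ_Sup)
  moreover have "qrel_le X Z (qcomp m Y tY psi phi0) xi"
    unfolding qrel_le_def qcomp_def phi0_def qmult_Sup_right by (auto intro!: SUP_least)
  moreover have "qrel_le X Y phi phi0"
    if "is_qrel m X tX Y tY phi" and "qrel_le X Z (qcomp m Y tY psi phi) xi" for phi
    using that unfolding qrel_le_def qcomp_def phi0_def is_qrel_def
    by (fastforce intro!: Sup_upper dest: SUP_le_iff[THEN iffD1])
  ultimately have "qext m X tX Y tY Z tZ psi xi x y = phi0 x y"
    unfolding qext_def using assms by (intro greatest_qrel_choice_eq)
  then show ?thesis
    by (simp add: phi0_def)
qed

lemma qext_qrel: "is_qrel m X tX Y tY (qext m X tX Y tY Z tZ psi xi)"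
  unfolding is_qrel_def by (auto simp: qext_eq_Sup intro: DQ_Sup)

lemma qext_comp_le:
  assumes "x \<in> X" and "y \<in> Y" and "z \<in> Z"
  shows "m (rdiv m (psi y z) (tY y)) (qext m X tX Y tY Z tZ psi xi x y) \<le> xi x z"
  using assms by (auto simp: qext_eq_Sup qmult_Sup_right intro!: SUP_least)

lemma le_qext:
  assumes "x \<in> X" and "y \<in> Y" and "u \<in> DQ m (tX x) (tY y)"
    and "\<forall>z\<in>Z. m (rdiv m (psi y z) (tY y)) u \<le> xi x z"
  shows "u \<le> qext m X tX Y tY Z tZ psi xi x y"
  using assms by (simp add: qext_eq_Sup Sup_upper)

lemma type_le_PS_rel_iff:
  assumes a: "is_qrel m X tX UNIV (\<lambda>_. snd a) (fst a)" and "snd a' = snd a"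
  shows "snd a \<le> PS_rel m X tX a a' \<longleftrightarrow> (\<forall>x\<in>X. fst a x () \<le> fst a' x ())"
proof
  assume le: "snd a \<le> PS_rel m X tX a a'"
  show "\<forall>x\<in>X. fst a x () \<le> fst a' x ()"
  proof
    fix x assume x: "x \<in> X"
    have "fst a x () \<le> m (rdiv m (PS_rel m X tX a a') (snd a)) (fst a x ())"
      using le by (rule le_mult_rdiv)
    also have "\<dots> \<le> fst a' x ()"
      unfolding PS_rel_def using qlift_comp_le[OF a x UNIV_I UNIV_I] by simp
    finally show "fst a x () \<le> fst a' x ()" .
  qed
next
  assume le: "\<forall>x\<in>X. fst a x () \<le> fst a' x ()"
  have "\<forall>x\<in>X. m (rdiv m (snd a) (snd a)) (fst a x ()) \<le> fst a' x ()"
    using a le unfolding is_qrel_def by (meson DQ_rdiv_self_mult_le UNIV_I order_trans)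
  then show "snd a \<le> PS_rel m X tX a a'"
    unfolding PS_rel_def using assms(2) by (intro le_qlift[OF a]) (simp_all add: DQ_self)
qed

lemma type_le_PD_rel_iff:
  assumes b: "is_qrel m UNIV (\<lambda>_. snd b) X tX (fst b)" and "snd b = snd b'"
  shows "snd b' \<le> PD_rel m X tX b' b \<longleftrightarrow> (\<forall>x\<in>X. fst b () x \<le> fst b' () x)"
proof -
  have b_DQ: "fst b () x \<in> DQ m (snd b') (tX x)" if "x \<in> X" for x
    using b that assms(2) unfolding is_qrel_def by auto
  show ?thesis
  proof
    assume le: "snd b' \<le> PD_rel m X tX b' b"
    show "\<forall>x\<in>X. fst b () x \<le> fst b' () x"
    proof
      fix x assume x: "x \<in> X"
      have "fst b () x \<le> m (rdiv m (fst b () x) (snd b')) (PD_rel m X tX b' b)"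
        using b_DQ[OF x] le by (rule DQ_le_mult_rdiv)
      also have "\<dots> \<le> fst b' () x"
        unfolding PD_rel_def using qext_comp_le[of "()" UNIV "()" UNIV x X] x assms(2) by simp
      finally show "fst b () x \<le> fst b' () x" .
    qed
  next
    assume "\<forall>x\<in>X. fst b () x \<le> fst b' () x"
    then have "\<forall>x\<in>X. m (rdiv m (fst b () x) (snd b')) (snd b') \<le> fst b' () x"
      using b_DQ DQ_rdiv_mult by metis
    then show "snd b' \<le> PD_rel m X tX b' b"
      unfolding PD_rel_def using assms(2) by (intro le_qext) (simp_all add: DQ_self)
  qed
qed

lemma le_dist_down_dist_up:
  assumes a: "is_qrel m X tX UNIV (\<lambda>_. snd a) (fst a)"
    and le: "\<forall>x\<in>X. \<forall>y\<in>Y. phi x y \<le> psi x y" and x: "x \<in> X"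
  shows "fst a x () \<le> fst (dist_down m X tX Y tY psi (dist_up m X tX Y tY phi a)) x ()"
  unfolding dist_up_def dist_down_def fst_conv snd_conv
proof (rule le_qext[OF x UNIV_I])
  show "fst a x () \<in> DQ m (tX x) (snd a)"
    using a x unfolding is_qrel_def by blast
  show "\<forall>y\<in>Y. m (rdiv m (qlift m X tX UNIV (\<lambda>_. snd a) Y tY phi (fst a) () y) (snd a)) (fst a x ())
      \<le> psi x y"
    using le x by (blast intro: order_trans[OF qlift_comp_le[OF a x UNIV_I]])
qed

lemma le_dist_up_dist_down:
  assumes b: "is_qrel m UNIV (\<lambda>_. snd b) Y tY (fst b)"
    and le: "\<forall>x\<in>X. \<forall>y\<in>Y. psi x y \<le> phi x y" and y: "y \<in> Y"
  shows "fst b () y \<le> fst (dist_up m X tX Y tY phi (dist_down m X tX Y tY psi b)) () y"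
  unfolding dist_up_def dist_down_def fst_conv snd_conv
proof (rule le_qlift[OF qext_qrel UNIV_I y])
  show "fst b () y \<in> DQ m (snd b) (tY y)"
    using b y unfolding is_qrel_def by blast
  show "\<forall>x\<in>X. m (rdiv m (fst b () y) (snd b)) (qext m X tX UNIV (\<lambda>_. snd b) Y tY (fst b) psi x ())
      \<le> phi x y" (is "\<forall>x\<in>X. ?lhs x \<le> _")
  proof
    fix x assume x: "x \<in> X"
    have "?lhs x \<le> psi x y"
      by (rule qext_comp_le[OF x UNIV_I y])
    then show "?lhs x \<le> phi x y"
      using le x y by (blast intro: order_trans)
  qed
qed

text \<open>The two relations are only required to agree on X \<times> Y: this is how the graph of f
  and the cograph of g coincide, as HOL functions they differ.\<close>

lemma qgalois_dist_up_down:
  assumes "\<forall>x\<in>X. \<forall>y\<in>Y. phi x y = psi x y"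
  shows "qgalois (PS m X tX RX) PS_ty (PS_rel m X tX) (PD m Y tY RY) PD_ty (PD_rel m Y tY)
    (dist_up m X tX Y tY phi) (dist_down m X tX Y tY psi)"
  unfolding qgalois_def PS_ty_def PD_ty_def
proof (intro conjI ballI)
  fix a assume "a \<in> PS m X tX RX"
  then have a: "is_qrel m X tX UNIV (\<lambda>_. snd a) (fst a)"
    by (rule PS_qrel)
  let ?ka = "dist_down m X tX Y tY psi (dist_up m X tX Y tY phi a)"
  have type: "snd ?ka = snd a"
    by (simp add: dist_up_def dist_down_def)
  have "\<forall>x\<in>X. fst a x () \<le> fst ?ka x ()"
    using assms by (intro ballI le_dist_down_dist_up[OF a]) auto
  then show "snd a \<le> PS_rel m X tX a ?ka"
    by (rule type_le_PS_rel_iff[OF a type, THEN iffD2])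
next
  fix b assume "b \<in> PD m Y tY RY"
  then have b: "is_qrel m UNIV (\<lambda>_. snd b) Y tY (fst b)"
    by (rule PD_qrel)
  let ?hb = "dist_up m X tX Y tY phi (dist_down m X tX Y tY psi b)"
  have type: "snd b = snd ?hb"
    by (simp add: dist_up_def dist_down_def)
  have "\<forall>y\<in>Y. fst b () y \<le> fst ?hb () y"
    using assms by (intro ballI le_dist_up_dist_down[OF b]) auto
  then have "snd ?hb \<le> PD_rel m Y tY ?hb b"
    by (rule type_le_PD_rel_iff[OF b type, THEN iffD2])
  then show "snd b \<le> PD_rel m Y tY ?hb b"
    by (simp only: type)
qed

lemma le_dist_pf_dist_pb:
  assumes a: "is_qrel m Y tY UNIV (\<lambda>_. snd a) (fst a)" and psi: "is_qrel m X tX Y tY psi"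
    and le: "\<forall>x\<in>X. \<forall>y\<in>Y. psi x y \<le> phi x y" and y: "y \<in> Y"
  shows "fst a y () \<le> fst (dist_pf m X tX Y tY psi (dist_pb m X tX Y tY phi a)) y ()"
  unfolding dist_pf_def dist_pb_def fst_conv snd_conv
proof (rule le_qlift[OF psi y UNIV_I])
  show "fst a y () \<in> DQ m (tY y) (snd a)"
    using a y unfolding is_qrel_def by blast
  show "\<forall>x\<in>X. m (rdiv m (fst a y ()) (tY y)) (psi x y) \<le> qcomp m Y tY (fst a) phi x ()"
    (is "\<forall>x\<in>X. m ?c (psi x y) \<le> _")
  proof
    fix x assume x: "x \<in> X"
    have "m ?c (psi x y) \<le> m ?c (phi x y)"
      using le x y by (blast intro: qmult_mono_right)
    also have "\<dots> \<le> qcomp m Y tY (fst a) phi x ()"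
      unfolding qcomp_def using y by (rule SUP_upper)
    finally show "m ?c (psi x y) \<le> qcomp m Y tY (fst a) phi x ()" .
  qed
qed

lemma dist_pb_dist_pf_le:
  assumes psi: "is_qrel m X tX Y tY psi"
    and le: "\<forall>x\<in>X. \<forall>y\<in>Y. phi x y \<le> psi x y" and x: "x \<in> X"
  shows "fst (dist_pb m X tX Y tY phi (dist_pf m X tX Y tY psi b)) x () \<le> fst b x ()"
proof -
  let ?\<kappa> = "qlift m X tX Y tY UNIV (\<lambda>_. snd b) (fst b) psi"
  have "m (rdiv m (?\<kappa> y ()) (tY y)) (phi x y) \<le> fst b x ()" if y: "y \<in> Y" for y
  proof -
    have "m (rdiv m (?\<kappa> y ()) (tY y)) (phi x y) \<le> m (rdiv m (?\<kappa> y ()) (tY y)) (psi x y)"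
      using le x y by (blast intro: qmult_mono_right)
    also have "\<dots> \<le> fst b x ()"
      by (rule qlift_comp_le[OF psi x y UNIV_I])
    finally show ?thesis .
  qed
  then show ?thesis
    unfolding dist_pb_def dist_pf_def qcomp_def by (simp add: SUP_least)
qed

lemma qgalois_dist_pb_pf:
  assumes phi: "is_qrel m X tX Y tY phi" and psi: "is_qrel m X tX Y tY psi"
    and eq: "\<forall>x\<in>X. \<forall>y\<in>Y. phi x y = psi x y"
  shows "qgalois (PS m Y tY RY) PS_ty (PS_rel m Y tY) (PS m X tX RX) PS_ty (PS_rel m X tX)
    (dist_pb m X tX Y tY phi) (dist_pf m X tX Y tY psi)"
  unfolding qgalois_def PS_ty_def
proof (intro conjI ballI)
  fix a assume "a \<in> PS m Y tY RY"
  then have a: "is_qrel m Y tY UNIV (\<lambda>_. snd a) (fst a)"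
    by (rule PS_qrel)
  let ?ka = "dist_pf m X tX Y tY psi (dist_pb m X tX Y tY phi a)"
  have type: "snd ?ka = snd a"
    by (simp add: dist_pf_def dist_pb_def)
  have "\<forall>y\<in>Y. fst a y () \<le> fst ?ka y ()"
    using eq by (intro ballI le_dist_pf_dist_pb[OF a psi]) auto
  then show "snd a \<le> PS_rel m Y tY a ?ka"
    by (rule type_le_PS_rel_iff[OF a type, THEN iffD2])
next
  fix b assume "b \<in> PS m X tX RX"
  let ?hb = "dist_pb m X tX Y tY phi (dist_pf m X tX Y tY psi b)"
  have hb: "is_qrel m X tX UNIV (\<lambda>_. snd ?hb) (fst ?hb)"
    unfolding dist_pb_def dist_pf_def using qcomp_qrel[OF phi qlift_qrel[OF psi]] by simp
  have type: "snd b = snd ?hb"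
    by (simp add: dist_pb_def dist_pf_def)
  have "\<forall>x\<in>X. fst ?hb x () \<le> fst b x ()"
    using eq by (intro ballI dist_pb_dist_pf_le[OF psi]) auto
  then have "snd ?hb \<le> PS_rel m X tX ?hb b"
    by (rule type_le_PS_rel_iff[OF hb type, THEN iffD2])
  then show "snd b \<le> PS_rel m X tX ?hb b"
    by (simp only: type)
qed

lemma dist_dpf_dist_dpb_le:
  assumes le: "\<forall>x\<in>X. \<forall>y\<in>Y. psi x y \<le> phi x y" and y: "y \<in> Y"
  shows "fst (dist_dpf m X tX Y tY psi (dist_dpb m X tX Y tY phi a)) () y \<le> fst a () y"
proof -
  let ?\<theta> = "qext m UNIV (\<lambda>_. snd a) X tX Y tY phi (fst a)"
  have "m (rdiv m (psi x y) (tX x)) (?\<theta> () x) \<le> fst a () y" if x: "x \<in> X" for x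
  proof -
    have "m (rdiv m (psi x y) (tX x)) (?\<theta> () x) \<le> m (rdiv m (phi x y) (tX x)) (?\<theta> () x)"
      using le x y by (blast intro: qmult_mono_left rdiv_mono)
    also have "\<dots> \<le> fst a () y"
      by (rule qext_comp_le[OF UNIV_I x y])
    finally show ?thesis .
  qed
  then show ?thesis
    unfolding dist_dpf_def dist_dpb_def qcomp_def by (simp add: SUP_least)
qed

lemma le_dist_dpb_dist_dpf:
  assumes b: "is_qrel m UNIV (\<lambda>_. snd b) X tX (fst b)"
    and le: "\<forall>x\<in>X. \<forall>y\<in>Y. phi x y \<le> psi x y" and x: "x \<in> X"
  shows "fst b () x \<le> fst (dist_dpb m X tX Y tY phi (dist_dpf m X tX Y tY psi b)) () x"
  unfolding dist_dpb_def dist_dpf_def fst_conv snd_conv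
proof (rule le_qext[OF UNIV_I x])
  show "fst b () x \<in> DQ m (snd b) (tX x)"
    using b x unfolding is_qrel_def by blast
  show "\<forall>y\<in>Y. m (rdiv m (phi x y) (tX x)) (fst b () x) \<le> qcomp m X tX psi (fst b) () y"
    (is "\<forall>y\<in>Y. ?lhs y \<le> ?rhs y")
  proof
    fix y assume y: "y \<in> Y"
    have "?lhs y \<le> m (rdiv m (psi x y) (tX x)) (fst b () x)"
      using le x y by (blast intro: qmult_mono_left rdiv_mono)
    also have "\<dots> \<le> ?rhs y"
      unfolding qcomp_def using x by (rule SUP_upper)
    finally show "?lhs y \<le> ?rhs y" .
  qed
qed

lemma qgalois_dist_dpb_dpf:
  assumes psi: "is_qrel m X tX Y tY psi" and eq: "\<forall>x\<in>X. \<forall>y\<in>Y. phi x y = psi x y"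
  shows "qgalois (PD m Y tY RY) PD_ty (PD_rel m Y tY) (PD m X tX RX) PD_ty (PD_rel m X tX)
    (dist_dpb m X tX Y tY phi) (dist_dpf m X tX Y tY psi)"
  unfolding qgalois_def PD_ty_def
proof (intro conjI ballI)
  fix a assume "a \<in> PD m Y tY RY"
  let ?ka = "dist_dpf m X tX Y tY psi (dist_dpb m X tX Y tY phi a)"
  have ka: "is_qrel m UNIV (\<lambda>_. snd ?ka) Y tY (fst ?ka)"
    unfolding dist_dpf_def dist_dpb_def using qcomp_qrel[OF qext_qrel psi] by simp
  have type: "snd ?ka = snd a"
    by (simp add: dist_dpf_def dist_dpb_def)
  have "\<forall>y\<in>Y. fst ?ka () y \<le> fst a () y"
    using eq by (intro ballI dist_dpf_dist_dpb_le) auto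
  then show "snd a \<le> PD_rel m Y tY a ?ka"
    by (rule type_le_PD_rel_iff[OF ka type, THEN iffD2])
next
  fix b assume "b \<in> PD m X tX RX"
  then have b: "is_qrel m UNIV (\<lambda>_. snd b) X tX (fst b)"
    by (rule PD_qrel)
  let ?hb = "dist_dpb m X tX Y tY phi (dist_dpf m X tX Y tY psi b)"
  have type: "snd b = snd ?hb"
    by (simp add: dist_dpb_def dist_dpf_def)
  have "\<forall>x\<in>X. fst b () x \<le> fst ?hb () x"
    using eq by (intro ballI le_dist_dpb_dist_dpf[OF b]) auto
  then have "snd ?hb \<le> PD_rel m X tX ?hb b"
    by (rule type_le_PD_rel_iff[OF b type, THEN iffD2])
  then show "snd b \<le> PD_rel m X tX ?hb b"
    by (simp only: type)
qed

end

locale qmono_pair = unital_quantale m e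
  for m :: "'q::complete_lattice \<Rightarrow> 'q \<Rightarrow> 'q" and e :: 'q +
  fixes X :: "'a set" and tX :: "'a \<Rightarrow> 'q" and RX :: "'a \<Rightarrow> 'a \<Rightarrow> 'q"
    and Y :: "'b set" and tY :: "'b \<Rightarrow> 'q" and RY :: "'b \<Rightarrow> 'b \<Rightarrow> 'q"
    and f :: "'a \<Rightarrow> 'b" and g :: "'b \<Rightarrow> 'a"
  assumes X_qpreorder: "qpreorder m X tX RX" and Y_qpreorder: "qpreorder m Y tY RY"
    and f_qmono: "qmono X tX RX Y tY RY f" and g_qmono: "qmono Y tY RY X tX RX g"
begin

abbreviation qpolarity_adjoint :: bool where
  "qpolarity_adjoint \<equiv> qgalois
    (PS m X tX RX) PS_ty (PS_rel m X tX) (PD m Y tY RY) PD_ty (PD_rel m Y tY)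
      (dist_up m X tX Y tY (graph RY f)) (dist_down m X tX Y tY (cograph RX g))"

abbreviation qaxiality_adjoint :: bool where
  "qaxiality_adjoint \<equiv> qgalois
    (PS m Y tY RY) PS_ty (PS_rel m Y tY) (PS m X tX RX) PS_ty (PS_rel m X tX)
      (dist_pb m X tX Y tY (graph RY f)) (dist_pf m X tX Y tY (cograph RX g))"

abbreviation dual_qaxiality_adjoint :: bool where
  "dual_qaxiality_adjoint \<equiv> qgalois
    (PD m Y tY RY) PD_ty (PD_rel m Y tY) (PD m X tX RX) PD_ty (PD_rel m X tX)
      (dist_dpb m X tX Y tY (graph RY f)) (dist_dpf m X tX Y tY (cograph RX g))"

lemma f_mem: "x \<in> X \<Longrightarrow> f x \<in> Y"
  using f_qmono unfolding qmono_def by blast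

lemma f_type: "x \<in> X \<Longrightarrow> tY (f x) = tX x"
  using f_qmono unfolding qmono_def by blast

lemma f_mono: "x \<in> X \<Longrightarrow> x' \<in> X \<Longrightarrow> RX x x' \<le> RY (f x) (f x')"
  using f_qmono unfolding qmono_def by blast

lemma g_mem: "y \<in> Y \<Longrightarrow> g y \<in> X"
  using g_qmono unfolding qmono_def by blast

lemma g_type: "y \<in> Y \<Longrightarrow> tX (g y) = tY y"
  using g_qmono unfolding qmono_def by blast

lemma g_mono: "y \<in> Y \<Longrightarrow> y' \<in> Y \<Longrightarrow> RY y y' \<le> RX (g y) (g y')"
  using g_qmono unfolding qmono_def by blast

lemmas X_qrel = qpreorder_qrel[OF X_qpreorder] and X_refl = qpreorder_refl[OF X_qpreorder]
  and X_trans = qpreorder_trans[OF X_qpreorder]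
lemmas Y_qrel = qpreorder_qrel[OF Y_qpreorder] and Y_refl = qpreorder_refl[OF Y_qpreorder]
  and Y_trans = qpreorder_trans[OF Y_qpreorder]

lemma graph_qrel: "is_qrel m X tX Y tY (graph RY f)"
  unfolding is_qrel_def graph_def using Y_qrel f_mem f_type by fastforce

lemma cograph_qrel: "is_qrel m X tX Y tY (cograph RX g)"
  unfolding is_qrel_def cograph_def using X_qrel g_mem g_type by fastforce

lemma qgalois_cograph_le_graph:
  assumes G: "qgalois X tX RX Y tY RY f g" and x: "x \<in> X" and y: "y \<in> Y"
  shows "cograph RX g x y \<le> graph RY f x y"
proof -
  have gy: "g y \<in> X"
    using g_mem y .
  have "RX x (g y) \<le> RY (f x) (f (g y))"
    by (rule f_mono[OF x gy])
  also have "\<dots> \<le> m (rdiv m (RY (f (g y)) y) (tY (f (g y)))) (RY (f x) (f (g y)))"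
    using G y f_type[OF gy] g_type[OF y] unfolding qgalois_def by (intro le_mult_rdiv) simp
  also have "\<dots> \<le> RY (f x) y"
    using f_mem x gy y by (intro Y_trans) auto
  finally show ?thesis
    unfolding graph_def cograph_def .
qed

lemma qgalois_graph_le_cograph:
  assumes G: "qgalois X tX RX Y tY RY f g" and x: "x \<in> X" and y: "y \<in> Y"
  shows "graph RY f x y \<le> cograph RX g x y"
proof -
  have fx: "f x \<in> Y"
    using f_mem x .
  have "RY (f x) y \<le> RX (g (f x)) (g y)"
    by (rule g_mono[OF fx y])
  also have "\<dots> \<le> m (rdiv m (RX (g (f x)) (g y)) (tX (g (f x)))) (RX x (g (f x)))"
    using G x X_qrel[of "g (f x)" "g y"] g_mem[OF fx] g_mem[OF y] g_type[OF fx] f_type[OF x]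
    unfolding qgalois_def by (intro DQ_le_mult_rdiv) auto
  also have "\<dots> \<le> RX x (g y)"
    using g_mem fx x y by (intro X_trans) auto
  finally show ?thesis
    unfolding graph_def cograph_def .
qed

lemma qgalois_iff_graph_eq_cograph:
  "qgalois X tX RX Y tY RY f g \<longleftrightarrow> (\<forall>x\<in>X. \<forall>y\<in>Y. graph RY f x y = cograph RX g x y)"
proof
  assume "qgalois X tX RX Y tY RY f g"
  then show "\<forall>x\<in>X. \<forall>y\<in>Y. graph RY f x y = cograph RX g x y"
    by (blast intro: antisym qgalois_graph_le_cograph qgalois_cograph_le_graph)
next
  assume eq: "\<forall>x\<in>X. \<forall>y\<in>Y. graph RY f x y = cograph RX g x y"
  have "tX x \<le> RX x (g (f x))" if "x \<in> X" for x
    using eq[rule_format, OF that f_mem[OF that]] Y_refl[OF f_mem[OF that]] f_type[OF that]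
    unfolding graph_def cograph_def by simp
  moreover have "tY y \<le> RY (f (g y)) y" if "y \<in> Y" for y
    using eq[rule_format, OF g_mem[OF that] that] X_refl[OF g_mem[OF that]] g_type[OF that]
    unfolding graph_def cograph_def by simp
  ultimately show "qgalois X tX RX Y tY RY f g"
    unfolding qgalois_def by blast
qed

lemma graph_le_dist_up_yoneda:
  assumes x: "x \<in> X" and y: "y \<in> Y"
  shows "RY (f x) y \<le> fst (dist_up m X tX Y tY (graph RY f) (yoneda tX RX x)) () y"
proof -
  have "m (rdiv m (RY (f x) y) (tX x)) (RX x' x) \<le> graph RY f x' y" if x': "x' \<in> X" for x'
  proof -
    have "m (rdiv m (RY (f x) y) (tX x)) (RX x' x)
        \<le> m (rdiv m (RY (f x) y) (tY (f x))) (RY (f x') (f x))"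
      using f_mono[OF x' x] f_type[OF x] by (simp add: qmult_mono_right)
    also have "\<dots> \<le> graph RY f x' y"
      unfolding graph_def using f_mem x x' y by (intro Y_trans) auto
    finally show ?thesis .
  qed
  moreover have "RY (f x) y \<in> DQ m (tX x) (tY y)"
    using Y_qrel[OF f_mem[OF x] y] f_type[OF x] by simp
  ultimately show ?thesis
    using PS_qrel[OF yoneda_in_PS[OF X_qpreorder x]] y
    unfolding dist_up_def yoneda_def by (auto intro: le_qlift)
qed

lemma cograph_le_dist_down_coyoneda:
  assumes x: "x \<in> X" and y: "y \<in> Y"
  shows "RX x (g y) \<le> fst (dist_down m X tX Y tY (cograph RX g) (coyoneda tY RY y)) x ()"
proof -
  have "m (rdiv m (RY y z) (tY y)) (RX x (g y)) \<le> cograph RX g x z" if z: "z \<in> Y" for z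
  proof -
    have "m (rdiv m (RY y z) (tY y)) (RX x (g y))
        \<le> m (rdiv m (RX (g y) (g z)) (tX (g y))) (RX x (g y))"
      using g_mono[OF y z] g_type[OF y] by (simp add: qmult_mono_left rdiv_mono)
    also have "\<dots> \<le> cograph RX g x z"
      unfolding cograph_def using g_mem x y z by (intro X_trans) auto
    finally show ?thesis .
  qed
  moreover have "RX x (g y) \<in> DQ m (tX x) (tY y)"
    using X_qrel[OF x g_mem[OF y]] g_type[OF y] by simp
  ultimately show ?thesis
    using x unfolding dist_down_def coyoneda_def by (auto intro: le_qext)
qed

lemma cograph_le_dist_pf_yoneda:
  assumes y: "y \<in> Y" and z: "z \<in> X"
  shows "RX (g y) z \<le> fst (dist_pf m X tX Y tY (cograph RX g) (yoneda tX RX z)) y ()"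
proof -
  have "m (rdiv m (RX (g y) z) (tY y)) (cograph RX g x y) \<le> RX x z" if x: "x \<in> X" for x
    unfolding cograph_def g_type[OF y, symmetric] using g_mem x y z by (intro X_trans) auto
  moreover have "RX (g y) z \<in> DQ m (tY y) (tX z)"
    using X_qrel[OF g_mem[OF y] z] g_type[OF y] by simp
  ultimately show ?thesis
    using y unfolding dist_pf_def yoneda_def by (auto intro: le_qlift[OF cograph_qrel])
qed

lemma dist_pb_yoneda_le_graph:
  assumes x: "x \<in> X" and y: "y \<in> Y"
  shows "fst (dist_pb m X tX Y tY (graph RY f) (yoneda tY RY y)) x () \<le> RY (f x) y"
  unfolding dist_pb_def yoneda_def qcomp_def graph_def
  using f_mem x y by (auto intro!: SUP_least Y_trans)

lemma dist_dpf_coyoneda_le_cograph: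
  assumes x: "x \<in> X" and y: "y \<in> Y"
  shows "fst (dist_dpf m X tX Y tY (cograph RX g) (coyoneda tX RX x)) () y \<le> RX x (g y)"
  unfolding dist_dpf_def coyoneda_def qcomp_def cograph_def
  using g_mem x y by (auto intro!: SUP_least X_trans)

lemma graph_le_dist_dpb_coyoneda:
  assumes x: "x \<in> X" and z: "z \<in> Y"
  shows "RY z (f x) \<le> fst (dist_dpb m X tX Y tY (graph RY f) (coyoneda tY RY z)) () x"
proof -
  have "m (rdiv m (graph RY f x y) (tX x)) (RY z (f x)) \<le> RY z y" if y: "y \<in> Y" for y
    unfolding graph_def f_type[OF x, symmetric] using f_mem x y z by (intro Y_trans) auto
  moreover have "RY z (f x) \<in> DQ m (tY z) (tX x)"
    using Y_qrel[OF z f_mem[OF x]] f_type[OF x] by simp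
  ultimately show ?thesis
    using x unfolding dist_dpb_def coyoneda_def by (auto intro: le_qext)
qed

lemma unit_of_qpolarity_adjoint:
  assumes H: qpolarity_adjoint and x: "x \<in> X"
  shows "tX x \<le> RX x (g (f x))"
proof -
  let ?a = "yoneda tX RX x"
  let ?ha = "dist_up m X tX Y tY (graph RY f) ?a"
  let ?kha = "dist_down m X tX Y tY (cograph RX g) ?ha"
  have a: "?a \<in> PS m X tX RX"
    by (rule yoneda_in_PS[OF X_qpreorder x])
  have "snd ?a \<le> PS_rel m X tX ?a ?kha"
    using H a unfolding qgalois_def PS_ty_def by blast
  then have "RX x x \<le> fst ?kha x ()"
    using type_le_PS_rel_iff[OF PS_qrel[OF a]] x
    by (simp add: dist_up_def dist_down_def yoneda_def)
  then have "tX x \<le> fst ?kha x ()"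
    using X_refl[OF x] by (rule order_trans[rotated])
  also have "\<dots> \<le> m (rdiv m (fst ?ha () (f x)) (tX x)) (fst ?kha x ())"
    using Y_refl[OF f_mem[OF x]] f_type[OF x] graph_le_dist_up_yoneda[OF x f_mem[OF x]]
    by (intro le_mult_rdiv) simp
  also have "\<dots> \<le> cograph RX g x (f x)"
    using qext_comp_le[OF x UNIV_I f_mem[OF x]] by (simp add: dist_up_def dist_down_def yoneda_def)
  finally show ?thesis
    unfolding cograph_def .
qed

lemma counit_of_qpolarity_adjoint:
  assumes H: qpolarity_adjoint and y: "y \<in> Y"
  shows "tY y \<le> RY (f (g y)) y"
proof -
  have gy: "g y \<in> X"
    using y by (rule g_mem)
  let ?b = "coyoneda tY RY y"
  let ?kb = "dist_down m X tX Y tY (cograph RX g) ?b"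
  let ?hkb = "dist_up m X tX Y tY (graph RY f) ?kb"
  have b: "?b \<in> PD m Y tY RY"
    by (rule coyoneda_in_PD[OF Y_qpreorder y])
  have type: "snd ?b = snd ?hkb"
    by (simp add: dist_up_def dist_down_def)
  have "snd ?b \<le> PD_rel m Y tY ?hkb ?b"
    using H b unfolding qgalois_def PD_ty_def by blast
  then have "snd ?hkb \<le> PD_rel m Y tY ?hkb ?b"
    by (simp only: type)
  then have "RY y y \<le> fst ?hkb () y"
    using type_le_PD_rel_iff[OF PD_qrel[OF b] type] y by (simp add: coyoneda_def)
  then have hkb: "tY y \<le> fst ?hkb () y"
    using Y_refl[OF y] by (rule order_trans[rotated])
  have "tY y \<le> RX (g y) (g y)"
    using X_refl[OF gy] g_type[OF y] by simp
  also have "\<dots> \<le> fst ?kb (g y) ()"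
    by (rule cograph_le_dist_down_coyoneda[OF gy y])
  also have "\<dots> \<le> m (rdiv m (fst ?hkb () y) (tY y)) (fst ?kb (g y) ())"
    using hkb by (rule le_mult_rdiv)
  also have "\<dots> \<le> graph RY f (g y) y"
    using qlift_comp_le[OF qext_qrel gy UNIV_I y]
    by (simp add: dist_up_def dist_down_def coyoneda_def)
  finally show ?thesis
    unfolding graph_def .
qed

lemma unit_of_qaxiality_adjoint:
  assumes H: qaxiality_adjoint and x: "x \<in> X"
  shows "tX x \<le> RX x (g (f x))"
proof -
  have fx: "f x \<in> Y" and gfx: "g (f x) \<in> X"
    using x by (simp_all add: f_mem g_mem)
  let ?b = "yoneda tX RX (g (f x))"
  let ?kb = "dist_pf m X tX Y tY (cograph RX g) ?b"
  let ?hkb = "dist_pb m X tX Y tY (graph RY f) ?kb"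
  have b: "?b \<in> PS m X tX RX"
    by (rule yoneda_in_PS[OF X_qpreorder gfx])
  have kb: "is_qrel m Y tY UNIV (\<lambda>_. snd ?b) (fst ?kb)"
    unfolding dist_pf_def by (simp add: qlift_qrel[OF cograph_qrel])
  have hkb: "is_qrel m X tX UNIV (\<lambda>_. snd ?hkb) (fst ?hkb)"
    using qcomp_qrel[OF graph_qrel kb] by (simp add: dist_pb_def dist_pf_def)
  have type: "snd ?b = snd ?hkb"
    by (simp add: dist_pb_def dist_pf_def)
  have "snd ?b \<le> PS_rel m X tX ?hkb ?b"
    using H b unfolding qgalois_def PS_ty_def by blast
  then have "snd ?hkb \<le> PS_rel m X tX ?hkb ?b"
    by (simp only: type)
  then have hkb_le: "fst ?hkb x () \<le> RX x (g (f x))"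
    using type_le_PS_rel_iff[OF hkb type] x by (simp add: yoneda_def)
  have "tX x \<le> RX (g (f x)) (g (f x))"
    using X_refl[OF gfx] g_type[OF fx] f_type[OF x] by simp
  also have "\<dots> \<le> fst ?kb (f x) ()"
    by (rule cograph_le_dist_pf_yoneda[OF fx gfx])
  also have "\<dots> \<le> m (rdiv m (fst ?kb (f x) ()) (tY (f x))) (graph RY f x (f x))"
    using kb fx Y_refl[OF fx] unfolding is_qrel_def graph_def by (intro DQ_le_mult_rdiv) auto
  also have "\<dots> \<le> fst ?hkb x ()"
    unfolding dist_pb_def qcomp_def using fx by (auto intro: SUP_upper)
  finally show ?thesis
    using hkb_le by (rule order_trans)
qed

lemma counit_of_qaxiality_adjoint:
  assumes H: qaxiality_adjoint and y: "y \<in> Y"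
  shows "tY y \<le> RY (f (g y)) y"
proof -
  have gy: "g y \<in> X"
    using y by (rule g_mem)
  let ?a = "yoneda tY RY y"
  let ?ha = "dist_pb m X tX Y tY (graph RY f) ?a"
  let ?kha = "dist_pf m X tX Y tY (cograph RX g) ?ha"
  have a: "?a \<in> PS m Y tY RY"
    by (rule yoneda_in_PS[OF Y_qpreorder y])
  have "snd ?a \<le> PS_rel m Y tY ?a ?kha"
    using H a unfolding qgalois_def PS_ty_def by blast
  then have "RY y y \<le> fst ?kha y ()"
    using type_le_PS_rel_iff[OF PS_qrel[OF a]] y
    by (simp add: dist_pb_def dist_pf_def yoneda_def)
  then have kha: "tY y \<le> fst ?kha y ()"
    using Y_refl[OF y] by (rule order_trans[rotated])
  have "tY y \<le> cograph RX g (g y) y"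
    using X_refl[OF gy] g_type[OF y] unfolding cograph_def by simp
  also have "\<dots> \<le> m (rdiv m (fst ?kha y ()) (tY y)) (cograph RX g (g y) y)"
    using kha by (rule le_mult_rdiv)
  also have "\<dots> \<le> fst ?ha (g y) ()"
    using qlift_comp_le[OF cograph_qrel gy y UNIV_I] by (simp add: dist_pf_def)
  also have "\<dots> \<le> RY (f (g y)) y"
    by (rule dist_pb_yoneda_le_graph[OF gy y])
  finally show ?thesis .
qed

lemma unit_of_dual_qaxiality_adjoint:
  assumes H: dual_qaxiality_adjoint and x: "x \<in> X"
  shows "tX x \<le> RX x (g (f x))"
proof -
  have fx: "f x \<in> Y"
    using x by (rule f_mem)
  let ?b = "coyoneda tX RX x"
  let ?kb = "dist_dpf m X tX Y tY (cograph RX g) ?b"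
  let ?hkb = "dist_dpb m X tX Y tY (graph RY f) ?kb"
  have b: "?b \<in> PD m X tX RX"
    by (rule coyoneda_in_PD[OF X_qpreorder x])
  have type: "snd ?b = snd ?hkb"
    by (simp add: dist_dpb_def dist_dpf_def)
  have "snd ?b \<le> PD_rel m X tX ?hkb ?b"
    using H b unfolding qgalois_def PD_ty_def by blast
  then have "snd ?hkb \<le> PD_rel m X tX ?hkb ?b"
    by (simp only: type)
  then have "RX x x \<le> fst ?hkb () x"
    using type_le_PD_rel_iff[OF PD_qrel[OF b] type] x by (simp add: coyoneda_def)
  then have "tX x \<le> fst ?hkb () x"
    using X_refl[OF x] by (rule order_trans[rotated])
  also have "\<dots> \<le> m (rdiv m (graph RY f x (f x)) (tX x)) (fst ?hkb () x)"
    using Y_refl[OF fx] f_type[OF x] unfolding graph_def by (intro le_mult_rdiv) simp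
  also have "\<dots> \<le> fst ?kb () (f x)"
    using qext_comp_le[OF UNIV_I x fx] by (simp add: dist_dpb_def)
  also have "\<dots> \<le> RX x (g (f x))"
    by (rule dist_dpf_coyoneda_le_cograph[OF x fx])
  finally show ?thesis .
qed

lemma counit_of_dual_qaxiality_adjoint:
  assumes H: dual_qaxiality_adjoint and y: "y \<in> Y"
  shows "tY y \<le> RY (f (g y)) y"
proof -
  have gy: "g y \<in> X" and fgy: "f (g y) \<in> Y"
    using y by (simp_all add: f_mem g_mem)
  let ?a = "coyoneda tY RY (f (g y))"
  let ?ha = "dist_dpb m X tX Y tY (graph RY f) ?a"
  let ?kha = "dist_dpf m X tX Y tY (cograph RX g) ?ha"
  have a: "?a \<in> PD m Y tY RY"
    by (rule coyoneda_in_PD[OF Y_qpreorder fgy])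
  have kha: "is_qrel m UNIV (\<lambda>_. snd ?kha) Y tY (fst ?kha)"
    using qcomp_qrel[OF qext_qrel cograph_qrel] by (simp add: dist_dpf_def dist_dpb_def)
  have type: "snd ?kha = snd ?a"
    by (simp add: dist_dpb_def dist_dpf_def)
  have "snd ?a \<le> PD_rel m Y tY ?a ?kha"
    using H a unfolding qgalois_def PD_ty_def by blast
  then have kha_le: "fst ?kha () y \<le> RY (f (g y)) y"
    using type_le_PD_rel_iff[OF kha type] y by (simp add: coyoneda_def)
  have "tY y \<le> RY (f (g y)) (f (g y))"
    using Y_refl[OF fgy] f_type[OF gy] g_type[OF y] by simp
  also have "\<dots> \<le> fst ?ha () (g y)"
    by (rule graph_le_dist_dpb_coyoneda[OF gy fgy])
  also have "\<dots> \<le> m (rdiv m (cograph RX g (g y) y) (tX (g y))) (fst ?ha () (g y))"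
    using X_refl[OF gy] unfolding cograph_def by (rule le_mult_rdiv)
  also have "\<dots> \<le> fst ?kha () y"
    unfolding dist_dpf_def qcomp_def using gy by (auto intro: SUP_upper)
  finally show ?thesis
    using kha_le by (rule order_trans)
qed

lemma qgalois_iff_qpolarity_adjoint: "qgalois X tX RX Y tY RY f g \<longleftrightarrow> qpolarity_adjoint"
proof
  assume "qgalois X tX RX Y tY RY f g"
  then show qpolarity_adjoint
    by (intro qgalois_dist_up_down) (simp add: qgalois_iff_graph_eq_cograph)
next
  assume H: qpolarity_adjoint
  show "qgalois X tX RX Y tY RY f g"
    using unit_of_qpolarity_adjoint[OF H] counit_of_qpolarity_adjoint[OF H]
    unfolding qgalois_def by blast
qed

lemma qgalois_iff_qaxiality_adjoint: "qgalois X tX RX Y tY RY f g \<longleftrightarrow> qaxiality_adjoint"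
proof
  assume "qgalois X tX RX Y tY RY f g"
  then show qaxiality_adjoint
    by (intro qgalois_dist_pb_pf[OF graph_qrel cograph_qrel]) (simp add: qgalois_iff_graph_eq_cograph)
next
  assume H: qaxiality_adjoint
  show "qgalois X tX RX Y tY RY f g"
    using unit_of_qaxiality_adjoint[OF H] counit_of_qaxiality_adjoint[OF H]
    unfolding qgalois_def by blast
qed

lemma qgalois_iff_dual_qaxiality_adjoint: "qgalois X tX RX Y tY RY f g \<longleftrightarrow> dual_qaxiality_adjoint"
proof
  assume "qgalois X tX RX Y tY RY f g"
  then show dual_qaxiality_adjoint
    by (intro qgalois_dist_dpb_dpf[OF cograph_qrel]) (simp add: qgalois_iff_graph_eq_cograph)
next
  assume H: dual_qaxiality_adjoint
  show "qgalois X tX RX Y tY RY f g"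
    using unit_of_dual_qaxiality_adjoint[OF H] counit_of_dual_qaxiality_adjoint[OF H]
    unfolding qgalois_def by blast
qed

end

theorem theorem4p22:
  fixes m :: "'q::complete_lattice \<Rightarrow> 'q \<Rightarrow> 'q" and e :: 'q
    and X :: "'a set" and tX :: "'a \<Rightarrow> 'q" and RX :: "'a \<Rightarrow> 'a \<Rightarrow> 'q"
    and Y :: "'b set" and tY :: "'b \<Rightarrow> 'q" and RY :: "'b \<Rightarrow> 'b \<Rightarrow> 'q"
    and f :: "'a \<Rightarrow> 'b" and g :: "'b \<Rightarrow> 'a"
  assumes Q: "quantale m e"
    and X: "qpreorder m X tX RX"
    and Y: "qpreorder m Y tY RY"
    and f: "qmono X tX RX Y tY RY f"
    and g: "qmono Y tY RY X tX RX g"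
  shows
    "(qgalois X tX RX Y tY RY f g
      \<longleftrightarrow> qgalois (PS m X tX RX) PS_ty (PS_rel m X tX) (PD m Y tY RY) PD_ty (PD_rel m Y tY)
            (dist_up m X tX Y tY (graph RY f)) (dist_down m X tX Y tY (cograph RX g)))
   \<and> (qgalois X tX RX Y tY RY f g
      \<longleftrightarrow> qgalois (PS m Y tY RY) PS_ty (PS_rel m Y tY) (PS m X tX RX) PS_ty (PS_rel m X tX)
            (dist_pb m X tX Y tY (graph RY f)) (dist_pf m X tX Y tY (cograph RX g)))
   \<and> (qgalois X tX RX Y tY RY f g
      \<longleftrightarrow> qgalois (PD m Y tY RY) PD_ty (PD_rel m Y tY) (PD m X tX RX) PD_ty (PD_rel m X tX)
            (dist_dpb m X tX Y tY (graph RY f)) (dist_dpf m X tX Y tY (cograph RX g)))"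
proof -
  interpret qmono_pair m e X tX RX Y tY RY f g
    using Q X Y f g by (intro qmono_pair.intro qmono_pair_axioms.intro unital_quantale.intro)
  show ?thesis
    using qgalois_iff_qpolarity_adjoint qgalois_iff_qaxiality_adjoint
      qgalois_iff_dual_qaxiality_adjoint by blast
qed

end
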